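(* Let $x,y$ be allocation rules of $n$-agent rank-based auctions, with $b$ the equilibrium bid function of the all-pay auction with rule $x$. If $\delta_N\le 1/n$, then $Z_y(\delta_N)\,b(\delta_N)\le e\,\delta_N\,y'(\delta_N)$.
   Context: Agents have values i.i.d. from a continuous distribution $F$ on $[0,1]$; quantile $q=F(v)$, $v(q)=F^{-1}(q)$. For $k\in\{1,\dots,n-1\}$ the $k$-highest-bids-win allocation rule is $x_k(q)=\sum_{i=0}^{k-1}\binom{n-1}{i}q^{n-1-i}(1-q)^i$; $x_0\equiv0$, $x_n\equiv1$. A rank-based auction with position weights $1\ge w_1\ge\cdots\ge w_n\ge 0$ ($w_{n+1}:=0$) has allocation rule $\sum_{k=1}^{n}(w_k-w_{k+1})x_k(q)$. The all-pay Bayes–Nash equilibrium bid function for rule $x$ satisfies $b(0)=0$, $b'(q)=v(q)x'(q)$. $Z_y(q)=(1-q)\,y'(q)/x'(q)$. $\delta_N=\max(25\log\log N,n)/N$. *)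

theory Defs
  imports "HOL-Analysis.Analysis"
begin

text \<open>k-highest-bids-win allocation rule for n agents (x_0 = 0, x_n = 1 automatically).\<close>
definition khw_alloc :: "nat \<Rightarrow> nat \<Rightarrow> real \<Rightarrow> real" where
  "khw_alloc n k q = (\<Sum>i<k. real ((n - 1) choose i) * q ^ (n - 1 - i) * (1 - q) ^ i)"

definition valid_weights :: "nat \<Rightarrow> (nat \<Rightarrow> real) \<Rightarrow> bool" where
  "valid_weights n w \<longleftrightarrow> w 1 \<le> 1 \<and> w n \<ge> 0 \<and> (\<forall>k\<in>{1..<n}. w (Suc k) \<le> w k)"

definition rank_alloc :: "nat \<Rightarrow> (nat \<Rightarrow> real) \<Rightarrow> real \<Rightarrow> real" where
  "rank_alloc n w q =
     (\<Sum>k=1..n. (w k - (if k = n then 0 else w (Suc k))) * khw_alloc n k q)"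

definition cont_cdf01 :: "(real \<Rightarrow> real) \<Rightarrow> bool" where
  "cont_cdf01 F \<longleftrightarrow> mono F \<and> continuous_on UNIV F \<and>
     (\<forall>t\<le>0. F t = 0) \<and> (\<forall>t\<ge>1. F t = 1)"

text \<open>Value as function of quantile: v(q) = F^{-1}(q) (generalized inverse).\<close>
definition quantile_val :: "(real \<Rightarrow> real) \<Rightarrow> real \<Rightarrow> real" where
  "quantile_val F q = Inf {t \<in> {0..1}. q \<le> F t}"

text \<open>All-pay BNE bid function: b(0)=0, b'(q) = v(q) x'(q).\<close>
definition allpay_bid :: "(real \<Rightarrow> real) \<Rightarrow> (real \<Rightarrow> real) \<Rightarrow> real \<Rightarrow> real" where
  "allpay_bid F x q = integral {0..q} (\<lambda>t. quantile_val F t * deriv x t)"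

definition Zfun :: "(real \<Rightarrow> real) \<Rightarrow> (real \<Rightarrow> real) \<Rightarrow> real \<Rightarrow> real" where
  "Zfun x y q = (1 - q) * deriv y q / deriv x q"

definition deltaN :: "nat \<Rightarrow> nat \<Rightarrow> real" where
  "deltaN n N = max (25 * ln (ln (real N))) (real n) / real N"

end

theory Submission imports Defs begin

text \<open>For quantiles \<open>t \<le> d\<close> the density of every \<open>k\<close>-highest-bids-win rule satisfies
  \<open>(1 - d)^(n-2) x\<^sub>k'(t) \<le> x\<^sub>k'(d)\<close>, and \<open>(1 - d)^(2-n) \<le> e\<close> as soon as \<open>n d \<le> 1\<close>.
  Rank-based rules are nonnegative combinations of these, so \<open>x'(t) \<le> e x'(d)\<close> on \<open>[0, d]\<close>;
  since values are at most 1, integrating \<open>b' = v x'\<close> gives \<open>b(d) \<le> e d x'(d)\<close>, and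
  multiplying by \<open>Z\<^sub>y(d) = (1 - d) y'(d) / x'(d)\<close> yields the claim.\<close>

text \<open>Here \<open>m = n - 1\<close>: \<open>khw_density m k\<close> is the derivative of the \<open>k\<close>-highest-bids-win rule
  for \<open>Suc m\<close> agents.\<close>
definition khw_density :: "nat \<Rightarrow> nat \<Rightarrow> real \<Rightarrow> real" where
  "khw_density m k q =
     (if k = 0 then 0 else real m * real ((m - 1) choose (k - 1)) * q ^ (m - k) * (1 - q) ^ (k - 1))"

lemma has_real_derivative_binomial_term:
  "((\<lambda>q::real. real (m choose k) * q ^ (m - k) * (1 - q) ^ k) has_real_derivative
     real (m choose k) * (real (m - k) * q ^ (m - k - 1) * (1 - q) ^ k
                          - q ^ (m - k) * (real k * (1 - q) ^ (k - 1)))) (at q)"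
  by (auto intro!: derivative_eq_intros simp: algebra_simps)

text \<open>The derivative of the binomial term telescopes against the densities.\<close>
lemma khw_density_Suc:
  assumes "k \<le> m"
  shows "khw_density m (Suc k) q = khw_density m k q +
     real (m choose k) * (real (m - k) * q ^ (m - k - 1) * (1 - q) ^ k
                          - q ^ (m - k) * (real k * (1 - q) ^ (k - 1)))"
proof -
  have comp: "real (m - k) * real (m choose k) = real m * real ((m - 1) choose k)"
    using binomial_absorb_comp[of m k] by (metis of_nat_mult)
  show ?thesis
  proof (cases k)
    case 0
    then show ?thesis using comp by (simp add: khw_density_def)
  next
    case (Suc i)
    have absorb: "real k * real (m choose k) = real m * real ((m - 1) choose i)"
      using binomial_absorption[of i m] Suc by (metis of_nat_mult)
    show ?thesis
    proof (cases "k = m")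
      case True
      then show ?thesis using Suc absorb by (simp add: khw_density_def algebra_simps)
    next
      case False
      then obtain j where j: "m - k = Suc j"
        using assms by (metis Suc_diff_Suc le_neq_implies_less)
      have ring_identity: "\<And>X Y C a b (q::real). X = C + a * C \<Longrightarrow> Y = C + b * C \<Longrightarrow>
          X * q ^ j * (1 - q) ^ Suc i = Y * q ^ Suc j * (1 - q) ^ i
            + C * ((1 + a) * q ^ j * (1 - q) ^ Suc i - q ^ Suc j * ((1 + b) * (1 - q) ^ i))"
        by (simp add: algebra_simps)
      have X: "real m * real ((m - 1) choose k) = real (m choose k) + real j * real (m choose k)"
        using comp j by (simp add: algebra_simps)
      have Y: "real m * real ((m - 1) choose i) = real (m choose k) + real i * real (m choose k)"
        using absorb Suc by (simp add: algebra_simps)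
      have "m - Suc k = j" "m - k - 1 = j" using j by simp_all
      then show ?thesis unfolding khw_density_def
        using Suc j ring_identity[OF X Y, of q] by (simp add: mult.assoc)
    qed
  qed
qed

lemma has_real_derivative_khw_alloc:
  "k \<le> Suc m \<Longrightarrow> (khw_alloc (Suc m) k has_real_derivative khw_density m k q) (at q)"
proof (induction k)
  case 0
  then show ?case by (simp add: khw_alloc_def khw_density_def)
next
  case (Suc k)
  have split: "khw_alloc (Suc m) (Suc k) =
          (\<lambda>q. khw_alloc (Suc m) k q + real (m choose k) * q ^ (m - k) * (1 - q) ^ k)"
    by (auto simp: khw_alloc_def)
  show ?case
    unfolding split khw_density_Suc[OF Suc_le_lessD[OF Suc.prems, THEN less_Suc_eq_le[THEN iffD1]]]
    using Suc.prems by (intro DERIV_add Suc.IH has_real_derivative_binomial_term) simp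
qed

lemma khw_density_nonneg: "0 \<le> q \<Longrightarrow> q \<le> 1 \<Longrightarrow> 0 \<le> khw_density m k q"
  by (simp add: khw_density_def)

lemma khw_density_ratio:
  assumes "0 \<le> t" "t \<le> d" "d \<le> 1" "k \<le> Suc m"
  shows "(1 - d) ^ (m - 1) * khw_density m k t \<le> khw_density m k d"
proof (cases "k = 0 \<or> m = 0 \<or> k = Suc m")
  case True
  then show ?thesis by (cases m) (auto simp: khw_density_def binomial_eq_0)
next
  case False
  then have k: "1 \<le> k" "k \<le> m" using assms by auto
  have "(1 - d) ^ (m - 1) * (1 - t) ^ (k - 1) \<le> (1 - d) ^ (m - 1)"
    using assms by (intro mult_left_le power_le_one) auto
  also have "\<dots> \<le> (1 - d) ^ (k - 1)"
    using assms k by (intro power_decreasing) auto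
  finally have "t ^ (m - k) * ((1 - d) ^ (m - 1) * (1 - t) ^ (k - 1)) \<le> d ^ (m - k) * (1 - d) ^ (k - 1)"
    using assms by (intro mult_mono power_mono) auto
  then have "real m * real ((m - 1) choose (k - 1)) * (t ^ (m - k) * ((1 - d) ^ (m - 1) * (1 - t) ^ (k - 1)))
     \<le> real m * real ((m - 1) choose (k - 1)) * (d ^ (m - k) * (1 - d) ^ (k - 1))"
    by (intro mult_left_mono) auto
  then show ?thesis using k by (simp add: khw_density_def algebra_simps)
qed

lemma one_le_exp1_mult_power:
  fixes d :: real
  assumes "0 \<le> d" "real (Suc p) * d \<le> 1"
  shows "1 \<le> exp 1 * (1 - d) ^ p"
proof (cases p)
  case 0
  then show ?thesis by (simp add: one_le_exp_iff)
next
  case (Suc p')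
  have "2 * d \<le> real (Suc p) * d" using assms Suc by (intro mult_right_mono) auto
  then have d1: "d < 1" using assms by linarith
  text \<open>\<open>(1 - d)^(-p) = (1 + y)^p \<le> exp (p y) \<le> e\<close>.\<close>
  define y where "y = d / (1 - d)"
  have "real p * d \<le> 1 - d" using assms by (simp add: algebra_simps)
  then have py: "real p * y \<le> 1" using d1 by (simp add: y_def field_simps)
  have "(1 + y) ^ p \<le> exp y ^ p"
    using assms d1 by (intro power_mono) (auto simp: y_def add.commute exp_ge_add_one_self)
  also have "\<dots> \<le> exp 1" using py by (simp flip: exp_of_nat_mult)
  finally have "(1 + y) ^ p \<le> exp 1" .
  have "1 = (1 - d) ^ p * (1 + y) ^ p"
    using d1 by (simp add: y_def field_simps flip: power_mult_distrib)
  also have "\<dots> \<le> (1 - d) ^ p * exp 1"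
    using d1 \<open>(1 + y) ^ p \<le> exp 1\<close> by (intro mult_left_mono) auto
  finally show ?thesis by (simp add: mult.commute)
qed

definition weight_gap :: "nat \<Rightarrow> (nat \<Rightarrow> real) \<Rightarrow> nat \<Rightarrow> real" where
  "weight_gap n w k = w k - (if k = n then 0 else w (Suc k))"

lemma weight_gap_nonneg: "valid_weights n w \<Longrightarrow> k \<in> {1..n} \<Longrightarrow> 0 \<le> weight_gap n w k"
  unfolding valid_weights_def weight_gap_def by auto

lemma deriv_rank_alloc:
  "deriv (rank_alloc (Suc m) w) q = (\<Sum>k=1..Suc m. weight_gap (Suc m) w k * khw_density m k q)"
proof (rule DERIV_imp_deriv)
  show "(rank_alloc (Suc m) w has_real_derivative
          (\<Sum>k=1..Suc m. weight_gap (Suc m) w k * khw_density m k q)) (at q)"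
    unfolding rank_alloc_def weight_gap_def
    by (intro DERIV_sum DERIV_cmult has_real_derivative_khw_alloc) auto
qed

lemma deriv_rank_alloc_nonneg:
  "valid_weights (Suc m) w \<Longrightarrow> 0 \<le> q \<Longrightarrow> q \<le> 1 \<Longrightarrow> 0 \<le> deriv (rank_alloc (Suc m) w) q"
  unfolding deriv_rank_alloc
  by (intro sum_nonneg mult_nonneg_nonneg weight_gap_nonneg khw_density_nonneg) auto

lemma deriv_rank_alloc_ratio:
  assumes "valid_weights (Suc m) w" "0 \<le> t" "t \<le> d" "d \<le> 1"
  shows "(1 - d) ^ (m - 1) * deriv (rank_alloc (Suc m) w) t \<le> deriv (rank_alloc (Suc m) w) d"
  unfolding deriv_rank_alloc sum_distrib_left
proof (intro sum_mono)
  fix k assume "k \<in> {1..Suc m}"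
  then show "(1 - d) ^ (m - 1) * (weight_gap (Suc m) w k * khw_density m k t)
               \<le> weight_gap (Suc m) w k * khw_density m k d"
    using assms khw_density_ratio[of t d k m] weight_gap_nonneg[of "Suc m" w k]
    by (simp add: mult.left_commute mult_left_mono)
qed

lemma deriv_rank_alloc_le_exp1:
  assumes "valid_weights (Suc m) w" "0 \<le> t" "t \<le> d" "real (Suc m) * d \<le> 1"
  shows "deriv (rank_alloc (Suc m) w) t \<le> exp 1 * deriv (rank_alloc (Suc m) w) d"
proof -
  have "1 * d \<le> real (Suc m) * d" using assms by (intro mult_right_mono) auto
  then have "d \<le> 1" using assms by linarith
  have "real (Suc (m - 1)) * d \<le> real (Suc m) * d" using assms by (intro mult_right_mono) auto
  then have "1 \<le> exp 1 * (1 - d) ^ (m - 1)"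
    using assms by (intro one_le_exp1_mult_power) auto
  then have "1 * deriv (rank_alloc (Suc m) w) t
               \<le> exp 1 * (1 - d) ^ (m - 1) * deriv (rank_alloc (Suc m) w) t"
    using assms \<open>d \<le> 1\<close> by (intro mult_right_mono deriv_rank_alloc_nonneg) auto
  then have "deriv (rank_alloc (Suc m) w) t
               \<le> exp 1 * ((1 - d) ^ (m - 1) * deriv (rank_alloc (Suc m) w) t)"
    by (simp add: mult.assoc)
  also have "\<dots> \<le> exp 1 * deriv (rank_alloc (Suc m) w) d"
    using assms \<open>d \<le> 1\<close> by (intro mult_left_mono deriv_rank_alloc_ratio) auto
  finally show ?thesis .
qed

lemma quantile_val_le_one: "F 1 = 1 \<Longrightarrow> q \<le> 1 \<Longrightarrow> quantile_val F q \<le> 1"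
  unfolding quantile_val_def by (rule cInf_lower) (auto simp: bdd_below_def)

text \<open>A non-integrable bid density makes the bid the junk value 0, hence \<open>0 \<le> C\<close>.\<close>
lemma allpay_bid_le:
  assumes "0 \<le> d" "0 \<le> C" "\<And>t. 0 \<le> t \<Longrightarrow> t \<le> d \<Longrightarrow> quantile_val F t * deriv x t \<le> C"
  shows "allpay_bid F x d \<le> d * C"
proof (cases "(\<lambda>t. quantile_val F t * deriv x t) integrable_on {0..d}")
  case True
  then have "allpay_bid F x d \<le> integral {0..d} (\<lambda>t. C)"
    unfolding allpay_bid_def using assms(3) by (intro integral_le) auto
  then show ?thesis using assms(1) by simp
next
  case False
  then show ?thesis using assms by (simp add: allpay_bid_def not_integrable_integral)
qed

lemma Zfun_mult_le:
  assumes "0 \<le> q" "q \<le> 1" "0 \<le> deriv x q" "0 \<le> deriv y q" "0 \<le> K" "b \<le> K * deriv x q"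
  shows "Zfun x y q * b \<le> K * deriv y q"
proof (cases "deriv x q = 0")
  case True
  then show ?thesis using assms by (simp add: Zfun_def)
next
  case False
  then have "0 < deriv x q" using assms by linarith
  then have "Zfun x y q * b \<le> (1 - q) * deriv y q / deriv x q * (K * deriv x q)"
    unfolding Zfun_def using assms by (intro mult_left_mono) auto
  also have "\<dots> = (1 - q) * (K * deriv y q)" using \<open>0 < deriv x q\<close> by simp
  also have "\<dots> \<le> K * deriv y q" using assms by (simp add: mult_left_le_one_le)
  finally show ?thesis .
qed

lemma allpay_bid_rank_alloc_le:
  assumes "valid_weights (Suc m) w" "F 1 = 1" "0 \<le> d" "real (Suc m) * d \<le> 1"
  shows "allpay_bid F (rank_alloc (Suc m) w) d \<le> exp 1 * d * deriv (rank_alloc (Suc m) w) d"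
proof -
  have "1 * d \<le> real (Suc m) * d" using assms by (intro mult_right_mono) auto
  then have "d \<le> 1" using assms by linarith
  have "quantile_val F t * deriv (rank_alloc (Suc m) w) t \<le> exp 1 * deriv (rank_alloc (Suc m) w) d"
    if "0 \<le> t" "t \<le> d" for t
  proof -
    have "quantile_val F t * deriv (rank_alloc (Suc m) w) t \<le> 1 * deriv (rank_alloc (Suc m) w) t"
      using that assms \<open>d \<le> 1\<close>
      by (intro mult_right_mono quantile_val_le_one deriv_rank_alloc_nonneg) auto
    also have "\<dots> \<le> exp 1 * deriv (rank_alloc (Suc m) w) d"
      using that assms by (simp add: deriv_rank_alloc_le_exp1)
    finally show ?thesis .
  qed
  then have "allpay_bid F (rank_alloc (Suc m) w) d \<le> d * (exp 1 * deriv (rank_alloc (Suc m) w) d)"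
    using assms \<open>d \<le> 1\<close> by (intro allpay_bid_le mult_nonneg_nonneg deriv_rank_alloc_nonneg) auto
  then show ?thesis by (simp add: mult.assoc mult.left_commute)
qed

theorem mainTheorem11:
  fixes n N :: nat and F :: "real \<Rightarrow> real" and w u :: "nat \<Rightarrow> real"
  assumes "n \<ge> 1"
    and "cont_cdf01 F"
    and "valid_weights n w" and "valid_weights n u"
    and "deltaN n N \<le> 1 / real n"
  shows "Zfun (rank_alloc n w) (rank_alloc n u) (deltaN n N)
           * allpay_bid F (rank_alloc n w) (deltaN n N)
         \<le> exp 1 * deltaN n N * deriv (rank_alloc n u) (deltaN n N)"
proof -
  obtain m where n: "n = Suc m" using assms(1) by (cases n) auto
  define d where "d = deltaN n N"
  have d0: "0 \<le> d" unfolding d_def deltaN_def by (intro divide_nonneg_nonneg) auto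
  have nd: "real (Suc m) * d \<le> 1" using assms(5) n by (simp add: d_def field_simps)
  moreover have "1 * d \<le> real (Suc m) * d" using d0 by (intro mult_right_mono) auto
  ultimately have d1: "d \<le> 1" by linarith
  have "F 1 = 1" using assms(2) unfolding cont_cdf01_def by auto
  then have "allpay_bid F (rank_alloc n w) d \<le> exp 1 * d * deriv (rank_alloc n w) d"
    using assms(3) n d0 nd by (simp add: allpay_bid_rank_alloc_le)
  moreover have "0 \<le> deriv (rank_alloc n w) d" "0 \<le> deriv (rank_alloc n u) d"
    using assms(3,4) d0 d1 unfolding n by (simp_all add: deriv_rank_alloc_nonneg)
  ultimately show ?thesis
    unfolding d_def[symmetric] using d0 d1 by (intro Zfun_mult_le) auto
qed

end
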